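(* There exist a constant $c_0>0$ and a nonincreasing positive function $R:[0,\infty)\to(0,\infty)$, both universal (not depending on $f,g,n,\delta$), such that for all bounded functions $f,g:[0,1]\to\mathbb R$, $$\|\mathbb P^n_f-\mathbb P^n_g\|_{TV}\le c_0\sqrt n\,\|f-g\|_\infty\quad\text{and}\quad 1-\tfrac12\|\mathbb P^n_f-\mathbb P^n_g\|_{TV}\ge R\big(n\,e^{\|f-g\|_\infty}\|f-g\|_\infty^2\big).$$
   Context: Let $n\ge1$, $\delta>0$ with $n\delta$ an integer. For a bounded function $f$ on $[0,1]$, $\mathbb P^n_f$ is the law of $(S_{i/n})_{0\le i\le n}$ where $S_t=S_0+\int_0^t\sigma_u\,dB_u$, $B$ a standard Brownian motion, $S_0$ deterministic, and $\sigma_t^2=\exp\big(f(\lfloor t/\delta\rfloor\delta)\big)$. For a signed measure $\mu$, $\|\mu\|_{TV}=\sup_{\|h\|_\infty\le1}|\int h\,d\mu|$. *)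

theory Defs
  imports "HOL-Probability.Probability"
begin

definition sigma2 :: "(real \<Rightarrow> real) \<Rightarrow> real \<Rightarrow> real \<Rightarrow> real" where
  "sigma2 f \<delta> t = exp (f (real_of_int \<lfloor>t / \<delta>\<rfloor> * \<delta>))"

text \<open>Variance of the increment S_{(j+1)/n} - S_{j/n} = integral of sigma^2 over [j/n,(j+1)/n].\<close>
definition incr_var :: "nat \<Rightarrow> real \<Rightarrow> (real \<Rightarrow> real) \<Rightarrow> nat \<Rightarrow> real" where
  "incr_var n \<delta> f j = (LBINT t = real j / real n .. real (Suc j) / real n. sigma2 f \<delta> t)"

definition incr_law :: "nat \<Rightarrow> real \<Rightarrow> (real \<Rightarrow> real) \<Rightarrow> (nat \<Rightarrow> real) measure" where
  "incr_law n \<delta> f =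
     (\<Pi>\<^sub>M j\<in>{..<n}. density lborel (normal_density 0 (sqrt (incr_var n \<delta> f j))))"

text \<open>P^n_f: the law of (S_{i/n})_{0 \<le> i \<le> n}, S_{i/n} = S_0 + sum of the first i increments.\<close>
definition obs_law :: "nat \<Rightarrow> real \<Rightarrow> real \<Rightarrow> (real \<Rightarrow> real) \<Rightarrow> (nat \<Rightarrow> real) measure" where
  "obs_law n \<delta> S0 f =
     distr (incr_law n \<delta> f) (\<Pi>\<^sub>M i\<in>{..n}. borel)
       (\<lambda>x. \<lambda>i\<in>{..n}. S0 + (\<Sum>j<i. x j))"

definition tv_dist :: "'a measure \<Rightarrow> 'a measure \<Rightarrow> real" where
  "tv_dist M N = (SUP h \<in> {h \<in> borel_measurable M. \<forall>x. \<bar>h x\<bar> \<le> 1}.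
                    \<bar>integral\<^sup>L M h - integral\<^sup>L N h\<bar>)"

definition sup_dist :: "(real \<Rightarrow> real) \<Rightarrow> (real \<Rightarrow> real) \<Rightarrow> real" where
  "sup_dist f g = (SUP x \<in> {0..1}. \<bar>f x - g x\<bar>)"

end

theory Submission
  imports Defs
begin

text \<open>
  Both observation laws are images, under the same map from increments to partial sums, of
  centred Gaussian product measures whose variances are integrals of the volatility over the
  same intervals; hence corresponding variances differ at most by the factor \<open>exp \<epsilon>\<close>,
  where \<open>\<epsilon> = \<parallel>f - g\<parallel>\<^sub>\<infinity>\<close>. Total variation does not increase under a common map,
  and Le Cam's inequality bounds it by \<open>2 \<surd>(1 - B\<^sup>2)\<close>, where \<open>B = \<integral> \<surd>(p q)\<close> is the
  Bhattacharyya coefficient. \<open>B\<close> is multiplicative over product densities, and for two centred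
  Gaussians with standard deviations \<open>a, b\<close> it equals \<open>\<surd>(2 a b / (a\<^sup>2 + b\<^sup>2)) \<ge> exp (- \<epsilon>\<^sup>2 exp \<epsilon> / 16)\<close>.
  Therefore the total variation is at most \<open>2 \<surd>(1 - exp (- n exp \<epsilon> \<epsilon>\<^sup>2 / 8))\<close>, which gives
  both bounds with \<open>c\<^sub>0 = 2\<close> and \<open>R x = 1 - \<surd>(1 - exp (- x / 8))\<close>.
\<close>

section \<open>Variances of the increments\<close>

lemma abs_diff_le_sup_dist:
  assumes "bounded (f ` {0..1})" "bounded (g ` {0..1})" "x \<in> {0..1}"
  shows "\<bar>f x - g x\<bar> \<le> sup_dist f g"
proof -
  have "bounded ((\<lambda>x. f x - g x) ` {0..1})"
    using bounded_minus_comp[OF assms(1,2)] by (simp add: image_image)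
  then have "bdd_above ((\<lambda>x. \<bar>f x - g x\<bar>) ` {0..1})"
    by (auto simp: bounded_iff bdd_above_def)
  then show ?thesis
    unfolding sup_dist_def using assms(3) by (rule cSUP_upper2) simp
qed

lemma sup_dist_nonneg:
  assumes "bounded (f ` {0..1})" "bounded (g ` {0..1})"
  shows "0 \<le> sup_dist f g"
  using abs_diff_le_sup_dist[OF assms, of 0] by simp

lemma sup_dist_commute: "sup_dist f g = sup_dist g f"
  unfolding sup_dist_def by (simp add: abs_minus_commute)

lemma grid_point_mem_unit_interval:
  assumes "\<delta> > 0" "t \<in> {0..1::real}"
  shows "real_of_int \<lfloor>t / \<delta>\<rfloor> * \<delta> \<in> {0..1}"
proof -
  have "real_of_int \<lfloor>t / \<delta>\<rfloor> \<le> t / \<delta>"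
    by simp
  then have "real_of_int \<lfloor>t / \<delta>\<rfloor> * \<delta> \<le> t"
    using assms(1) by (simp add: le_divide_eq)
  then show ?thesis using assms by auto
qed

lemma sigma2_measurable [measurable]: "sigma2 f \<delta> \<in> borel_measurable borel"
proof -
  have "(\<lambda>t. (\<lambda>k::int. \<lambda>t. exp (f (real_of_int k * \<delta>))) \<lfloor>t / \<delta>\<rfloor> t) \<in> borel_measurable borel"
    by (rule measurable_compose_countable) auto
  then show ?thesis unfolding sigma2_def[abs_def] by simp
qed

lemma sigma2_pos: "0 < sigma2 f \<delta> t"
  unfolding sigma2_def by simp

lemma sigma2_bounds:
  assumes "\<delta> > 0" "t \<in> {0..1}" "\<And>x. x \<in> {0..1} \<Longrightarrow> \<bar>f x\<bar> \<le> M"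
  shows "exp (- M) \<le> sigma2 f \<delta> t" "sigma2 f \<delta> t \<le> exp M"
  using assms(3)[OF grid_point_mem_unit_interval[OF assms(1,2)]] unfolding sigma2_def by auto

lemma sigma2_le_exp_sup_dist_mult:
  assumes "\<delta> > 0" "t \<in> {0..1}" "bounded (f ` {0..1})" "bounded (g ` {0..1})"
  shows "sigma2 f \<delta> t \<le> exp (sup_dist f g) * sigma2 g \<delta> t"
  using abs_diff_le_sup_dist[OF assms(3,4) grid_point_mem_unit_interval[OF assms(1,2)]]
  unfolding sigma2_def by (simp flip: exp_add)

lemma incr_var_eq_set_integral:
  "incr_var n \<delta> f j = (LBINT t : {real j / real n .. real (Suc j) / real n}. sigma2 f \<delta> t)"
  unfolding incr_var_def by (rule interval_integral_Icc) (simp add: divide_right_mono)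

lemma incr_interval_subset:
  assumes "j < n"
  shows "{real j / real n .. real (Suc j) / real n} \<subseteq> {0..1}"
  using assms by auto

lemma sigma2_set_integrable:
  assumes "\<delta> > 0" "bounded (f ` {0..1})" "A \<subseteq> {0..1}" "A \<in> sets lborel"
  shows "set_integrable lborel A (sigma2 f \<delta>)"
proof -
  obtain M where M: "\<And>x. x \<in> {0..1} \<Longrightarrow> \<bar>f x\<bar> \<le> M"
    using assms(2) by (force simp: bounded_iff)
  have "emeasure lborel A \<le> emeasure lborel {0..1::real}"
    using assms(3,4) by (intro emeasure_mono) auto
  then have "emeasure lborel A < \<infinity>"
    by (simp add: le_less_trans)
  moreover have "\<bar>sigma2 f \<delta> t\<bar> \<le> exp M" if "t \<in> A" for t
    using sigma2_bounds(2)[of \<delta> t f M] sigma2_pos[of f \<delta> t] assms(1,3) M that by auto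
  ultimately show ?thesis
    unfolding set_integrable_def using assms(4)
    by (intro integrableI_bounded_set_indicator[where B = "exp M"]) auto
qed

lemma incr_var_pos:
  assumes "\<delta> > 0" "bounded (f ` {0..1})" "j < n"
  shows "0 < incr_var n \<delta> f j"
proof -
  obtain M where M: "\<And>x. x \<in> {0..1} \<Longrightarrow> \<bar>f x\<bar> \<le> M"
    using assms(2) by (force simp: bounded_iff)
  let ?A = "{real j / real n .. real (Suc j) / real n}"
  have "0 < exp (- M) * (1 / real n)"
    using assms(3) by simp
  also have "\<dots> = measure lborel ?A *\<^sub>R exp (- M)"
    by (simp add: measure_lborel_Icc divide_right_mono diff_divide_distrib[symmetric])
  also have "\<dots> = (LBINT t : ?A. exp (- M))"
    by (rule set_integral_const[symmetric]) (auto simp: emeasure_lborel_Icc_eq)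
  also have "\<dots> \<le> (LBINT t : ?A. sigma2 f \<delta> t)"
  proof (rule set_integral_mono)
    show "set_integrable lborel ?A (\<lambda>t. exp (- M))"
      by (auto simp: set_integrable_def integrable_indicator_iff emeasure_lborel_Icc_eq)
    show "set_integrable lborel ?A (sigma2 f \<delta>)"
      using incr_interval_subset[OF assms(3)] by (intro sigma2_set_integrable[OF assms(1,2)]) auto
    show "exp (- M) \<le> sigma2 f \<delta> t" if "t \<in> ?A" for t
      using subsetD[OF incr_interval_subset[OF assms(3)] that] by (rule sigma2_bounds(1)[OF assms(1) _ M])
  qed
  finally show ?thesis
    unfolding incr_var_eq_set_integral .
qed

lemma incr_var_le_exp_sup_dist_mult:
  assumes "\<delta> > 0" "bounded (f ` {0..1})" "bounded (g ` {0..1})" "j < n"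
  shows "incr_var n \<delta> f j \<le> exp (sup_dist f g) * incr_var n \<delta> g j"
proof -
  let ?A = "{real j / real n .. real (Suc j) / real n}"
  have "(LBINT t : ?A. sigma2 f \<delta> t) \<le> (LBINT t : ?A. exp (sup_dist f g) * sigma2 g \<delta> t)"
    using incr_interval_subset[OF assms(4)]
      sigma2_set_integrable[OF assms(1,2), of ?A] sigma2_set_integrable[OF assms(1,3), of ?A]
      sigma2_le_exp_sup_dist_mult[OF assms(1) subsetD[OF incr_interval_subset[OF assms(4)]] assms(2,3)]
    by (intro set_integral_mono) auto
  then show ?thesis
    unfolding incr_var_eq_set_integral by simp
qed

section \<open>The Bhattacharyya coefficient and Le Cam's inequality\<close>

lemma abs_diff_le_sqrt_mult_weighted:
  fixes p q t :: real
  assumes "0 \<le> p" "0 \<le> q" "0 < t"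
  shows "2 * t * \<bar>p - q\<bar> \<le> t\<^sup>2 * (p + q - 2 * sqrt (p * q)) + (p + q + 2 * sqrt (p * q))"
proof -
  define u v where "u = sqrt p" and "v = sqrt q"
  have uv: "u \<ge> 0" "v \<ge> 0" "p = u\<^sup>2" "q = v\<^sup>2" "sqrt (p * q) = u * v"
    using assms by (simp_all add: u_def v_def real_sqrt_mult)
  have "0 \<le> (t * \<bar>u - v\<bar> - (u + v))\<^sup>2"
    by simp
  then have "2 * t * (\<bar>u - v\<bar> * (u + v)) \<le> t\<^sup>2 * (u - v)\<^sup>2 + (u + v)\<^sup>2"
    by (simp add: power2_eq_square algebra_simps abs_mult_self_eq)
  moreover have "\<bar>p - q\<bar> = \<bar>u - v\<bar> * (u + v)"
  proof -
    have "p - q = (u - v) * (u + v)"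
      using uv by (simp add: power2_eq_square algebra_simps)
    then show ?thesis
      using uv by (simp add: abs_mult)
  qed
  ultimately show ?thesis
    using uv by (simp add: power2_eq_square algebra_simps)
qed

lemma le_two_sqrt_one_minus_sq:
  fixes B D :: real
  assumes "0 \<le> B" "B \<le> 1" and D: "\<And>t. 0 < t \<Longrightarrow> D \<le> t * (1 - B) + (1 + B) / t"
  shows "D \<le> 2 * sqrt (1 - B\<^sup>2)"
proof (cases "B < 1")
  case True
  \<comment> \<open>the minimiser of the right-hand side\<close>
  define t where "t = sqrt ((1 + B) / (1 - B))"
  have "t * (1 - B) = sqrt ((1 + B) / (1 - B) * (1 - B)\<^sup>2)"
    using True by (simp only: t_def real_sqrt_mult) simp
  also have "(1 + B) / (1 - B) * (1 - B)\<^sup>2 = 1 - B\<^sup>2"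
    using True by (simp add: power2_eq_square field_simps)
  finally have "t * (1 - B) = sqrt (1 - B\<^sup>2)" .
  moreover have "(1 + B) / t = sqrt ((1 + B)\<^sup>2 / ((1 + B) / (1 - B)))"
    using assms(1) by (simp only: t_def real_sqrt_divide) simp
  moreover have "(1 + B)\<^sup>2 / ((1 + B) / (1 - B)) = 1 - B\<^sup>2"
    using assms(1) True by (simp add: power2_eq_square field_simps)
  ultimately show ?thesis
    using D[of t] assms(1) True by (simp add: t_def)
next
  case False
  then have "B = 1"
    using assms(2) by simp
  \<comment> \<open>now the hypothesis reads \<open>D \<le> 2 / t\<close> for all \<open>t > 0\<close>\<close>
  have "D \<le> 0"
  proof (rule ccontr)
    assume "\<not> D \<le> 0"
    then show False
      using D[of "4 / D"] \<open>B = 1\<close> by simp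
  qed
  then show ?thesis
    using \<open>B = 1\<close> by simp
qed

definition bhattacharyya :: "'a measure \<Rightarrow> ('a \<Rightarrow> real) \<Rightarrow> ('a \<Rightarrow> real) \<Rightarrow> real" where
  "bhattacharyya M p q = (\<integral>x. sqrt (p x * q x) \<partial>M)"

context
  fixes M :: "'a measure" and p q :: "'a \<Rightarrow> real"
  assumes p_measurable [measurable]: "p \<in> borel_measurable M"
    and q_measurable [measurable]: "q \<in> borel_measurable M"
    and p_nonneg: "\<And>x. 0 \<le> p x" and q_nonneg: "\<And>x. 0 \<le> q x"
    and p_integrable: "integrable M p" and q_integrable: "integrable M q"
    and p_integral: "integral\<^sup>L M p = 1" and q_integral: "integral\<^sup>L M q = 1"
begin

lemma integrable_sqrt_mult: "integrable M (\<lambda>x. sqrt (p x * q x))"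
proof (rule Bochner_Integration.integrable_bound)
  show "integrable M (\<lambda>x. (p x + q x) / 2)"
    using p_integrable q_integrable by simp
  show "AE x in M. norm (sqrt (p x * q x)) \<le> norm ((p x + q x) / 2)"
    using arith_geo_mean_sqrt p_nonneg q_nonneg by simp
qed simp

lemma bhattacharyya_nonneg: "0 \<le> bhattacharyya M p q"
  unfolding bhattacharyya_def using p_nonneg q_nonneg by simp

lemma bhattacharyya_le_1: "bhattacharyya M p q \<le> 1"
proof -
  have "bhattacharyya M p q \<le> (\<integral>x. (p x + q x) / 2 \<partial>M)"
    unfolding bhattacharyya_def
    using integrable_sqrt_mult p_integrable q_integrable arith_geo_mean_sqrt p_nonneg q_nonneg
    by (intro integral_mono) auto
  also have "\<dots> = 1"
    using p_integrable q_integrable p_integral q_integral by simp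
  finally show ?thesis .
qed

lemma L1_dist_le_bhattacharyya:
  "(\<integral>x. \<bar>p x - q x\<bar> \<partial>M) \<le> 2 * sqrt (1 - (bhattacharyya M p q)\<^sup>2)"
proof (rule le_two_sqrt_one_minus_sq[OF bhattacharyya_nonneg bhattacharyya_le_1])
  fix t :: real assume "0 < t"
  let ?B = "bhattacharyya M p q"
  have "2 * t * (\<integral>x. \<bar>p x - q x\<bar> \<partial>M)
      \<le> (\<integral>x. t\<^sup>2 * (p x + q x - 2 * sqrt (p x * q x)) + (p x + q x + 2 * sqrt (p x * q x)) \<partial>M)"
    using \<open>0 < t\<close> p_integrable q_integrable integrable_sqrt_mult
      abs_diff_le_sqrt_mult_weighted[OF p_nonneg q_nonneg \<open>0 < t\<close>]
    by (subst integral_mult_right_zero[symmetric]) (intro integral_mono; simp)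
  also have "\<dots> = t\<^sup>2 * (2 - 2 * ?B) + (2 + 2 * ?B)"
    using p_integrable q_integrable integrable_sqrt_mult p_integral q_integral
    by (simp add: bhattacharyya_def)
  finally show "(\<integral>x. \<bar>p x - q x\<bar> \<partial>M) \<le> t * (1 - ?B) + (1 + ?B) / t"
    using \<open>0 < t\<close> by (simp add: field_simps power2_eq_square)
qed

lemma abs_integral_density_diff_le_bhattacharyya:
  assumes [measurable]: "h \<in> borel_measurable M" and h_bounded: "\<And>x. \<bar>h x\<bar> \<le> 1"
  shows "\<bar>integral\<^sup>L (density M p) h - integral\<^sup>L (density M q) h\<bar>
    \<le> 2 * sqrt (1 - (bhattacharyya M p q)\<^sup>2)"
proof -
  have integrable_mult_h: "integrable M (\<lambda>x. r x * h x)"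
    if "integrable M r" "r \<in> borel_measurable M" for r
    using that h_bounded
    by (intro Bochner_Integration.integrable_bound[OF integrable_abs[OF that(1)]])
       (auto simp: abs_mult intro!: mult_left_le)
  have "integral\<^sup>L (density M p) h - integral\<^sup>L (density M q) h = (\<integral>x. (p x - q x) * h x \<partial>M)"
    using p_nonneg q_nonneg p_integrable q_integrable integrable_mult_h
    by (simp add: integral_real_density left_diff_distrib)
  also have "\<bar>\<dots>\<bar> \<le> (\<integral>x. \<bar>(p x - q x) * h x\<bar> \<partial>M)"
    by (rule integral_abs_bound)
  also have "\<dots> \<le> (\<integral>x. \<bar>p x - q x\<bar> \<partial>M)"
  proof (rule integral_mono)
    show "integrable M (\<lambda>x. \<bar>(p x - q x) * h x\<bar>)"
      using p_integrable q_integrable by (intro integrable_abs integrable_mult_h) auto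
    show "integrable M (\<lambda>x. \<bar>p x - q x\<bar>)"
      using p_integrable q_integrable by auto
    show "\<bar>(p x - q x) * h x\<bar> \<le> \<bar>p x - q x\<bar>" for x
      using h_bounded[of x] by (simp add: abs_mult mult_left_le)
  qed
  finally show ?thesis
    using L1_dist_le_bhattacharyya by linarith
qed

lemma tv_dist_distr_density_le_bhattacharyya:
  assumes T [measurable]: "T \<in> measurable M N"
  shows "tv_dist (distr (density M p) N T) (distr (density M q) N T)
    \<le> 2 * sqrt (1 - (bhattacharyya M p q)\<^sup>2)"
  unfolding tv_dist_def
proof (rule cSUP_least)
  have "(\<lambda>_. 0) \<in> {h \<in> borel_measurable (distr (density M p) N T). \<forall>x. \<bar>h x\<bar> \<le> (1::real)}"
    by simp
  then show "{h \<in> borel_measurable (distr (density M p) N T). \<forall>x. \<bar>h x\<bar> \<le> (1::real)} \<noteq> {}"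
    by blast
next
  fix h :: "_ \<Rightarrow> real"
  assume "h \<in> {h \<in> borel_measurable (distr (density M p) N T). \<forall>x. \<bar>h x\<bar> \<le> 1}"
  then have [measurable]: "h \<in> borel_measurable N" and h_bounded: "\<And>x. \<bar>h x\<bar> \<le> 1"
    by auto
  have "integral\<^sup>L (distr (density M r) N T) h = integral\<^sup>L (density M r) (\<lambda>x. h (T x))" for r
    by (rule integral_distr) simp_all
  then show "\<bar>integral\<^sup>L (distr (density M p) N T) h - integral\<^sup>L (distr (density M q) N T) h\<bar>
      \<le> 2 * sqrt (1 - (bhattacharyya M p q)\<^sup>2)"
    using abs_integral_density_diff_le_bhattacharyya[of "\<lambda>x. h (T x)"] h_bounded by simp
qed

end

section \<open>Centred Gaussian densities\<close>

lemma normal_density_zero_mean: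
  assumes "0 < c"
  shows "normal_density 0 c x = exp (- (x\<^sup>2 / (2 * c\<^sup>2))) / (sqrt (2 * pi) * c)"
  using assms by (simp add: normal_density_def real_sqrt_mult)

lemma normal_density_mult_eq_sq:
  fixes a b x :: real
  assumes "0 < a" "0 < b"
  defines "s \<equiv> sqrt (2 * a\<^sup>2 * b\<^sup>2 / (a\<^sup>2 + b\<^sup>2))"
  shows "normal_density 0 a x * normal_density 0 b x
    = (sqrt (2 * a * b / (a\<^sup>2 + b\<^sup>2)) * normal_density 0 s x)\<^sup>2"
proof -
  have sum_pos: "0 < a\<^sup>2 + b\<^sup>2"
    using assms(1) by (simp add: add_pos_nonneg)
  have s_pos: "0 < s"
    using assms(1,2) sum_pos by (simp add: s_def)
  have s_sq: "s\<^sup>2 = 2 * a\<^sup>2 * b\<^sup>2 / (a\<^sup>2 + b\<^sup>2)"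
    using sum_pos by (simp add: s_def)
  have exponent: "x\<^sup>2 / (2 * a\<^sup>2) + x\<^sup>2 / (2 * b\<^sup>2) = x\<^sup>2 / s\<^sup>2"
    unfolding s_sq using assms(1,2) sum_pos by (simp add: field_simps)
  define E where "E = exp (- (x\<^sup>2 / s\<^sup>2))"
  define c where "c = 2 * a * b / (a\<^sup>2 + b\<^sup>2)"
  have "0 < c"
    using assms(1,2) sum_pos by (simp add: c_def)
  have "s\<^sup>2 = c * (a * b)"
    unfolding s_sq c_def by (simp add: power2_eq_square)
  have "normal_density 0 a x * normal_density 0 b x
      = exp (- (x\<^sup>2 / (2 * a\<^sup>2)) + - (x\<^sup>2 / (2 * b\<^sup>2))) / (2 * pi * (a * b))"
    unfolding normal_density_zero_mean[OF assms(1)] normal_density_zero_mean[OF assms(2)] exp_add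
    by simp
  also have "\<dots> = E / (2 * pi * (a * b))"
    by (simp only: E_def exponent flip: minus_add_distrib)
  also have "\<dots> = c * E / (2 * pi * s\<^sup>2)"
    using \<open>0 < c\<close> \<open>s\<^sup>2 = c * (a * b)\<close> assms(1,2) by (simp add: field_simps)
  also have "\<dots> = (sqrt c * normal_density 0 s x)\<^sup>2"
  proof -
    have "exp (- (x\<^sup>2 / (2 * s\<^sup>2))) ^ 2 = E"
      by (simp add: E_def flip: exp_of_nat_mult)
    then show ?thesis
      unfolding normal_density_zero_mean[OF s_pos] using \<open>0 < c\<close>
      by (simp add: power_mult_distrib power_divide)
  qed
  finally show ?thesis
    by (simp add: c_def)
qed

lemma sqrt_normal_density_mult:
  fixes a b x :: real
  assumes "0 < a" "0 < b"
  shows "sqrt (normal_density 0 a x * normal_density 0 b x)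
    = sqrt (2 * a * b / (a\<^sup>2 + b\<^sup>2)) * normal_density 0 (sqrt (2 * a\<^sup>2 * b\<^sup>2 / (a\<^sup>2 + b\<^sup>2))) x"
  using normal_density_mult_eq_sq[OF assms] assms by simp

lemma bhattacharyya_normal_density:
  assumes "0 < a" "0 < b"
  shows "bhattacharyya lborel (normal_density 0 a) (normal_density 0 b) = sqrt (2 * a * b / (a\<^sup>2 + b\<^sup>2))"
proof -
  have "0 < sqrt (2 * a\<^sup>2 * b\<^sup>2 / (a\<^sup>2 + b\<^sup>2))"
    using assms by (simp add: add_pos_nonneg)
  then show ?thesis
    unfolding bhattacharyya_def sqrt_normal_density_mult[OF assms] by simp
qed

lemma exp_minus_le_inverse_one_plus:
  fixes z :: real
  assumes "0 \<le> z"
  shows "exp (- z) \<le> 1 / (1 + z)"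
  using exp_ge_add_one_self[of z] assms by (simp add: exp_minus field_simps)

lemma exp_le_two_mult_div_sum_sq_of_le:
  fixes a b e :: real
  assumes "0 < a" "a \<le> b" "0 \<le> e" "b\<^sup>2 \<le> exp e * a\<^sup>2"
  shows "exp (- (e\<^sup>2 * exp e / 8)) \<le> 2 * a * b / (a\<^sup>2 + b\<^sup>2)"
proof -
  define w where "w = b / a"
  have "1 \<le> w"
    using assms(1,2) by (simp add: w_def)
  have "w\<^sup>2 \<le> exp (e / 2) ^ 2"
    using assms(1,4) by (simp add: w_def power_divide divide_le_eq mult.commute flip: exp_of_nat_mult)
  then have "w \<le> exp (e / 2)"
    by (rule power2_le_imp_le) simp
  moreover have "exp (e / 2) - 1 \<le> e / 2 * exp (e / 2)"
  proof -
    have "exp (e / 2) * (1 - e / 2) \<le> exp (e / 2) * exp (- (e / 2))"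
      using exp_ge_add_one_self[of "- (e / 2)"] by (intro mult_left_mono) auto
    then show ?thesis
      by (simp add: algebra_simps flip: exp_add)
  qed
  ultimately have "(w - 1)\<^sup>2 \<le> (e / 2 * exp (e / 2))\<^sup>2"
    using \<open>1 \<le> w\<close> by (intro power_mono) auto
  also have "\<dots> = e\<^sup>2 * exp e / 4"
    by (simp add: power_mult_distrib power_divide flip: exp_of_nat_mult)
  finally have w_bound: "(w - 1)\<^sup>2 \<le> e\<^sup>2 * exp e / 4" .
  define z where "z = (b - a)\<^sup>2 / (2 * a * b)"
  have "z \<le> (b - a)\<^sup>2 / (2 * a * a)"
    unfolding z_def using assms(1,2) by (intro divide_left_mono mult_left_mono) auto
  also have "\<dots> = (w - 1)\<^sup>2 / 2"
    using assms(1) by (simp add: w_def power_divide power2_eq_square field_simps)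
  finally have "exp (- (e\<^sup>2 * exp e / 8)) \<le> exp (- z)"
    using w_bound by simp
  also have "\<dots> \<le> 1 / (1 + z)"
    using assms(1,2) by (intro exp_minus_le_inverse_one_plus) (simp add: z_def)
  also have "\<dots> = 2 * a * b / (a\<^sup>2 + b\<^sup>2)"
    using assms(1,2) by (simp add: z_def power2_eq_square field_simps)
  finally show ?thesis .
qed

lemma bhattacharyya_normal_density_ge:
  fixes a b e :: real
  assumes "0 < a" "0 < b" "0 \<le> e" "a\<^sup>2 \<le> exp e * b\<^sup>2" "b\<^sup>2 \<le> exp e * a\<^sup>2"
  shows "exp (- (e\<^sup>2 * exp e / 16)) \<le> bhattacharyya lborel (normal_density 0 a) (normal_density 0 b)"
proof -
  have "exp (- (e\<^sup>2 * exp e / 8)) \<le> 2 * a * b / (a\<^sup>2 + b\<^sup>2)"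
  proof (cases "a \<le> b")
    case True
    then show ?thesis
      using exp_le_two_mult_div_sum_sq_of_le assms(1,3,5) by blast
  next
    case False
    then show ?thesis
      using exp_le_two_mult_div_sum_sq_of_le[of b a e] assms(2,3,4) by (simp add: ac_simps)
  qed
  then have "sqrt (exp (- (e\<^sup>2 * exp e / 8))) \<le> sqrt (2 * a * b / (a\<^sup>2 + b\<^sup>2))"
    by (rule real_sqrt_le_mono)
  moreover have "sqrt (exp (- (e\<^sup>2 * exp e / 8))) = exp (- (e\<^sup>2 * exp e / 16))"
    by (simp add: real_sqrt_unique flip: exp_of_nat_mult)
  ultimately show ?thesis
    using bhattacharyya_normal_density[OF assms(1,2)] by simp
qed

section \<open>Product densities\<close>

lemma indicator_PiE_eq_prod:
  assumes "finite I" "x \<in> extensional I"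
  shows "(indicator (Pi\<^sub>E I A) x :: ennreal) = (\<Prod>i\<in>I. indicator (A i) (x i))"
proof (cases "x \<in> Pi\<^sub>E I A")
  case False
  then obtain i where "i \<in> I" "x i \<notin> A i"
    using assms(2) by (auto simp: PiE_iff)
  then show ?thesis
    using False assms(1) by (auto simp: indicator_def intro!: prod_zero)
qed (auto simp: indicator_def PiE_iff)

lemma PiM_density:
  fixes M :: "'i \<Rightarrow> 'a measure" and p :: "'i \<Rightarrow> 'a \<Rightarrow> real"
  assumes "finite I" and M: "product_sigma_finite M"
    and density_M: "product_sigma_finite (\<lambda>i. density (M i) (p i))"
    and [measurable]: "\<And>i. p i \<in> borel_measurable (M i)" and nonneg: "\<And>i x. 0 \<le> p i x"
  shows "PiM I (\<lambda>i. density (M i) (p i)) = density (PiM I M) (\<lambda>x. \<Prod>i\<in>I. p i (x i))"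
proof -
  interpret M: product_sigma_finite M
    by (fact M)
  interpret D: product_sigma_finite "\<lambda>i. density (M i) (p i)"
    by (fact density_M)
  have "density (PiM I M) (\<lambda>x. \<Prod>i\<in>I. p i (x i)) = PiM I (\<lambda>i. density (M i) (p i))"
  proof (rule D.PiM_eqI[OF \<open>finite I\<close>])
    show "sets (density (PiM I M) (\<lambda>x. \<Prod>i\<in>I. p i (x i))) = sets (PiM I (\<lambda>i. density (M i) (p i)))"
      by (auto intro!: sets_PiM_cong)
  next
    fix A assume A: "\<And>i. i \<in> I \<Longrightarrow> A i \<in> sets (density (M i) (p i))"
    then have "Pi\<^sub>E I A \<in> sets (PiM I M)"
      using \<open>finite I\<close> by (auto intro!: sets_PiM_I_finite)
    then have "emeasure (density (PiM I M) (\<lambda>x. \<Prod>i\<in>I. p i (x i))) (Pi\<^sub>E I A)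
        = (\<integral>\<^sup>+x. ennreal (\<Prod>i\<in>I. p i (x i)) * indicator (Pi\<^sub>E I A) x \<partial>PiM I M)"
      by (simp add: emeasure_density)
    also have "\<dots> = (\<integral>\<^sup>+x. (\<Prod>i\<in>I. ennreal (p i (x i)) * indicator (A i) (x i)) \<partial>PiM I M)"
    proof (rule nn_integral_cong)
      fix x assume "x \<in> space (PiM I M)"
      then have "x \<in> extensional I"
        by (simp add: space_PiM PiE_def)
      then show "ennreal (\<Prod>i\<in>I. p i (x i)) * indicator (Pi\<^sub>E I A) x
          = (\<Prod>i\<in>I. ennreal (p i (x i)) * indicator (A i) (x i))"
        using \<open>finite I\<close> nonneg by (simp add: indicator_PiE_eq_prod prod.distrib prod_ennreal)
    qed
    also have "\<dots> = (\<Prod>i\<in>I. \<integral>\<^sup>+y. ennreal (p i y) * indicator (A i) y \<partial>M i)"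
      using A \<open>finite I\<close> by (intro M.product_nn_integral_prod) auto
    also have "\<dots> = (\<Prod>i\<in>I. emeasure (density (M i) (p i)) (A i))"
      using A by (intro prod.cong refl) (simp add: emeasure_density)
    finally show "emeasure (density (PiM I M) (\<lambda>x. \<Prod>i\<in>I. p i (x i))) (Pi\<^sub>E I A)
        = (\<Prod>i\<in>I. emeasure (density (M i) (p i)) (A i))" .
  qed
  then show ?thesis ..
qed

lemma product_sigma_finite_lborel: "product_sigma_finite (\<lambda>_. lborel :: real measure)"
  unfolding product_sigma_finite_def by (simp add: lborel.sigma_finite_measure_axioms)

lemma PiM_normal_density:
  assumes "finite I" "\<And>i. i \<in> I \<Longrightarrow> 0 < \<sigma> i"
  shows "PiM I (\<lambda>i. density lborel (normal_density 0 (\<sigma> i)))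
    = density (PiM I (\<lambda>_. lborel)) (\<lambda>x. \<Prod>i\<in>I. normal_density 0 (\<sigma> i) (x i))"
proof -
  \<comment> \<open>\<open>PiM_density\<close> needs sigma-finite factors at every index, not only on \<open>I\<close>\<close>
  define \<tau> where "\<tau> i = (if i \<in> I then \<sigma> i else 1)" for i
  have "0 < \<tau> i" for i
    using assms(2) by (simp add: \<tau>_def)
  then have "product_sigma_finite (\<lambda>i. density lborel (normal_density 0 (\<tau> i)))"
    unfolding product_sigma_finite_def
    using prob_space_normal_density prob_space_imp_sigma_finite by blast
  then have "PiM I (\<lambda>i. density lborel (normal_density 0 (\<tau> i)))
      = density (PiM I (\<lambda>_. lborel)) (\<lambda>x. \<Prod>i\<in>I. normal_density 0 (\<tau> i) (x i))"
    using assms(1) by (intro PiM_density product_sigma_finite_lborel) auto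
  then show ?thesis
    by (simp add: \<tau>_def cong: PiM_cong prod.cong)
qed

lemma real_sqrt_prod:
  "finite I \<Longrightarrow> (\<And>i. i \<in> I \<Longrightarrow> 0 \<le> a i) \<Longrightarrow> sqrt (\<Prod>i\<in>I. a i) = (\<Prod>i\<in>I. sqrt (a i))"
  by (induction I rule: finite_induct) (auto simp: real_sqrt_mult)

lemma bhattacharyya_PiM:
  fixes M :: "'i \<Rightarrow> 'a measure" and p q :: "'i \<Rightarrow> 'a \<Rightarrow> real"
  assumes "finite I" "product_sigma_finite M"
    and "\<And>i x. 0 \<le> p i x" "\<And>i x. 0 \<le> q i x"
    and "\<And>i. i \<in> I \<Longrightarrow> integrable (M i) (\<lambda>x. sqrt (p i x * q i x))"
  shows "bhattacharyya (PiM I M) (\<lambda>x. \<Prod>i\<in>I. p i (x i)) (\<lambda>x. \<Prod>i\<in>I. q i (x i))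
    = (\<Prod>i\<in>I. bhattacharyya (M i) (p i) (q i))"
proof -
  interpret product_sigma_finite M
    by (fact assms(2))
  have "sqrt ((\<Prod>i\<in>I. p i (x i)) * (\<Prod>i\<in>I. q i (x i))) = (\<Prod>i\<in>I. sqrt (p i (x i) * q i (x i)))" for x
    using assms(1,3,4) by (simp add: real_sqrt_prod flip: prod.distrib)
  then show ?thesis
    unfolding bhattacharyya_def using assms(1,5)
    by (simp only:) (rule product_integral_prod)
qed

lemma
  assumes "finite I" "\<And>i. i \<in> I \<Longrightarrow> 0 < \<sigma> i"
  shows integrable_prod_normal_density:
      "integrable (PiM I (\<lambda>_. lborel)) (\<lambda>x. \<Prod>i\<in>I. normal_density 0 (\<sigma> i) (x i))"
    and integral_prod_normal_density:
      "(\<integral>x. (\<Prod>i\<in>I. normal_density 0 (\<sigma> i) (x i)) \<partial>PiM I (\<lambda>_. lborel)) = 1"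
proof -
  interpret product_sigma_finite "\<lambda>_. lborel :: real measure"
    by (fact product_sigma_finite_lborel)
  show "integrable (PiM I (\<lambda>_. lborel)) (\<lambda>x. \<Prod>i\<in>I. normal_density 0 (\<sigma> i) (x i))"
    using assms by (intro product_integrable_prod) auto
  show "(\<integral>x. (\<Prod>i\<in>I. normal_density 0 (\<sigma> i) (x i)) \<partial>PiM I (\<lambda>_. lborel)) = 1"
    using assms by (subst product_integral_prod) auto
qed

lemma bhattacharyya_prod_normal_density_ge:
  fixes \<sigma> \<tau> :: "'i \<Rightarrow> real"
  assumes "finite I" "0 \<le> e" and pos: "\<And>i. i \<in> I \<Longrightarrow> 0 < \<sigma> i" "\<And>i. i \<in> I \<Longrightarrow> 0 < \<tau> i"
    and ratio: "\<And>i. i \<in> I \<Longrightarrow> (\<sigma> i)\<^sup>2 \<le> exp e * (\<tau> i)\<^sup>2" "\<And>i. i \<in> I \<Longrightarrow> (\<tau> i)\<^sup>2 \<le> exp e * (\<sigma> i)\<^sup>2"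
  shows "exp (- (real (card I) * exp e * e\<^sup>2) / 16)
    \<le> bhattacharyya (PiM I (\<lambda>_. lborel))
        (\<lambda>x. \<Prod>i\<in>I. normal_density 0 (\<sigma> i) (x i)) (\<lambda>x. \<Prod>i\<in>I. normal_density 0 (\<tau> i) (x i))"
proof -
  have "exp (- (real (card I) * exp e * e\<^sup>2) / 16) = (\<Prod>i\<in>I. exp (- (e\<^sup>2 * exp e / 16)))"
    by (simp add: ac_simps flip: exp_of_nat_mult)
  also have "\<dots> \<le> (\<Prod>i\<in>I. bhattacharyya lborel (normal_density 0 (\<sigma> i)) (normal_density 0 (\<tau> i)))"
    using pos ratio by (intro prod_mono conjI bhattacharyya_normal_density_ge \<open>0 \<le> e\<close>) simp_all
  also have "\<dots> = bhattacharyya (PiM I (\<lambda>_. lborel))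
      (\<lambda>x. \<Prod>i\<in>I. normal_density 0 (\<sigma> i) (x i)) (\<lambda>x. \<Prod>i\<in>I. normal_density 0 (\<tau> i) (x i))"
    using \<open>finite I\<close> pos
    by (intro bhattacharyya_PiM[symmetric] product_sigma_finite_lborel integrable_sqrt_mult) auto
  finally show ?thesis .
qed

section \<open>Total variation between the observation laws\<close>

lemma tv_dist_obs_law_le:
  fixes f g :: "real \<Rightarrow> real"
  assumes "\<delta> > 0" and bounded_f: "bounded (f ` {0..1})" and bounded_g: "bounded (g ` {0..1})"
  defines "e \<equiv> sup_dist f g"
  shows "tv_dist (obs_law n \<delta> S0 f) (obs_law n \<delta> S0 g)
    \<le> 2 * sqrt (1 - exp (- (real n * exp e * e\<^sup>2) / 8))"
proof -
  define \<sigma> \<tau> where "\<sigma> j = sqrt (incr_var n \<delta> f j)" and "\<tau> j = sqrt (incr_var n \<delta> g j)" for j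
  have \<sigma>_pos: "0 < \<sigma> j" and \<tau>_pos: "0 < \<tau> j" if "j \<in> {..<n}" for j
    using that incr_var_pos[OF assms(1) bounded_f] incr_var_pos[OF assms(1) bounded_g]
    by (simp_all add: \<sigma>_def \<tau>_def)
  define p q where "p x = (\<Prod>j<n. normal_density 0 (\<sigma> j) (x j))"
    and "q x = (\<Prod>j<n. normal_density 0 (\<tau> j) (x j))" for x :: "nat \<Rightarrow> real"
  let ?\<mu> = "PiM {..<n} (\<lambda>_. lborel :: real measure)"
  define T where "T x = (\<lambda>i\<in>{..n}. S0 + (\<Sum>j<i. x j))" for x :: "nat \<Rightarrow> real"
  have T_measurable: "T \<in> measurable ?\<mu> (PiM {..n} (\<lambda>_. borel))"
    unfolding T_def by (intro measurable_restrict borel_measurable_add borel_measurable_sum) auto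
  have "incr_law n \<delta> f = density ?\<mu> p"
    unfolding incr_law_def p_def \<sigma>_def[symmetric] using \<sigma>_pos by (intro PiM_normal_density) auto
  then have obs_law_f: "obs_law n \<delta> S0 f = distr (density ?\<mu> p) (PiM {..n} (\<lambda>_. borel)) T"
    by (simp add: obs_law_def T_def[abs_def])
  have "incr_law n \<delta> g = density ?\<mu> q"
    unfolding incr_law_def q_def \<tau>_def[symmetric] using \<tau>_pos by (intro PiM_normal_density) auto
  then have obs_law_g: "obs_law n \<delta> S0 g = distr (density ?\<mu> q) (PiM {..n} (\<lambda>_. borel)) T"
    by (simp add: obs_law_def T_def[abs_def])
  have "tv_dist (distr (density ?\<mu> p) (PiM {..n} (\<lambda>_. borel)) T)
      (distr (density ?\<mu> q) (PiM {..n} (\<lambda>_. borel)) T) \<le> 2 * sqrt (1 - (bhattacharyya ?\<mu> p q)\<^sup>2)"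
    unfolding p_def q_def using \<sigma>_pos \<tau>_pos
    by (intro tv_dist_distr_density_le_bhattacharyya T_measurable integrable_prod_normal_density
        integral_prod_normal_density) (auto intro!: prod_nonneg)
  moreover have "exp (- (real (card {..<n}) * exp e * e\<^sup>2) / 16) \<le> bhattacharyya ?\<mu> p q"
    unfolding p_def q_def
  proof (rule bhattacharyya_prod_normal_density_ge)
    show "finite {..<n}" "0 \<le> e"
      unfolding e_def using bounded_f bounded_g by (simp_all add: sup_dist_nonneg)
    fix j assume "j \<in> {..<n}"
    then have "j < n"
      by simp
    note var_pos = incr_var_pos[OF assms(1) bounded_f \<open>j < n\<close>] incr_var_pos[OF assms(1) bounded_g \<open>j < n\<close>]
    show "0 < \<sigma> j" "0 < \<tau> j"
      using var_pos by (simp_all add: \<sigma>_def \<tau>_def)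
    show "(\<sigma> j)\<^sup>2 \<le> exp e * (\<tau> j)\<^sup>2"
      using var_pos incr_var_le_exp_sup_dist_mult[OF assms(1) bounded_f bounded_g \<open>j < n\<close>]
      by (simp add: \<sigma>_def \<tau>_def e_def)
    show "(\<tau> j)\<^sup>2 \<le> exp e * (\<sigma> j)\<^sup>2"
      using var_pos incr_var_le_exp_sup_dist_mult[OF assms(1) bounded_g bounded_f \<open>j < n\<close>]
      by (simp add: \<sigma>_def \<tau>_def e_def sup_dist_commute)
  qed
  then have "exp (- (real n * exp e * e\<^sup>2) / 16) ^ 2 \<le> (bhattacharyya ?\<mu> p q)\<^sup>2"
    by (intro power_mono) simp_all
  then have "sqrt (1 - (bhattacharyya ?\<mu> p q)\<^sup>2) \<le> sqrt (1 - exp (- (real n * exp e * e\<^sup>2) / 8))"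
    by (simp add: mult.assoc flip: exp_of_nat_mult)
  ultimately show ?thesis
    unfolding obs_law_f obs_law_g by linarith
qed

lemma sqrt_one_minus_exp_le:
  fixes e m :: real
  assumes "0 \<le> e" "1 \<le> m"
  shows "sqrt (1 - exp (- (m * exp e * e\<^sup>2) / 8)) \<le> sqrt m * e"
proof (cases "e \<le> 1")
  case True
  have "exp e \<le> 8"
    using True exp_le order.trans[of "exp e" "exp 1" 3] by simp
  have "1 - exp (- (m * exp e * e\<^sup>2) / 8) \<le> m * exp e * e\<^sup>2 / 8"
    using exp_ge_add_one_self[of "- (m * exp e * e\<^sup>2) / 8"] by simp
  also have "\<dots> = m * e\<^sup>2 * exp e / 8"
    by (simp add: algebra_simps)
  also have "\<dots> \<le> m * e\<^sup>2"
    using mult_left_mono[OF \<open>exp e \<le> 8\<close>, of "m * e\<^sup>2"] assms(2) by simp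
  finally have "sqrt (1 - exp (- (m * exp e * e\<^sup>2) / 8)) \<le> sqrt (m * e\<^sup>2)"
    by (rule real_sqrt_le_mono)
  then show ?thesis
    using assms(1) by (simp add: real_sqrt_mult)
next
  case False
  then have "1 \<le> sqrt m * e"
    using assms(2) by (intro order.trans[OF _ mult_mono[of 1 "sqrt m" 1 e]]) auto
  moreover have "sqrt (1 - exp (- (m * exp e * e\<^sup>2) / 8)) \<le> 1"
    by simp
  ultimately show ?thesis
    by linarith
qed

lemma tv_dist_obs_law_le_sqrt:
  assumes "1 \<le> n" "\<delta> > 0" "bounded (f ` {0..1})" "bounded (g ` {0..1})"
  shows "tv_dist (obs_law n \<delta> S0 f) (obs_law n \<delta> S0 g) \<le> 2 * sqrt (real n) * sup_dist f g"
  using tv_dist_obs_law_le[OF assms(2-4), of n S0]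
    sqrt_one_minus_exp_le[OF sup_dist_nonneg[OF assms(3,4)], of n] assms(1)
  by simp

theorem proposition4:
  shows "\<exists>c0 > (0::real). \<exists>R :: real \<Rightarrow> real.
     (\<forall>x \<ge> 0. R x > 0) \<and> (\<forall>x y. 0 \<le> x \<longrightarrow> x \<le> y \<longrightarrow> R y \<le> R x) \<and>
     (\<forall>(n::nat) (\<delta>::real) (S0::real) (f::real \<Rightarrow> real) (g::real \<Rightarrow> real).
        n \<ge> 1 \<longrightarrow> \<delta> > 0 \<longrightarrow> (\<exists>k::nat. real n * \<delta> = real k) \<longrightarrow>
        bounded (f ` {0..1}) \<longrightarrow> bounded (g ` {0..1}) \<longrightarrow>
        tv_dist (obs_law n \<delta> S0 f) (obs_law n \<delta> S0 g) \<le> c0 * sqrt (real n) * sup_dist f g \<and>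
        1 - tv_dist (obs_law n \<delta> S0 f) (obs_law n \<delta> S0 g) / 2
          \<ge> R (real n * exp (sup_dist f g) * (sup_dist f g)\<^sup>2))"
proof -
  define R where "R x = 1 - sqrt (1 - exp (- x / 8))" for x :: real
  have R_pos: "R x > 0" for x
    by (simp add: R_def)
  have R_antimono: "R y \<le> R x" if "x \<le> y" for x y
    using that by (simp add: R_def)
  have R_le: "R (real n * exp (sup_dist f g) * (sup_dist f g)\<^sup>2)
      \<le> 1 - tv_dist (obs_law n \<delta> S0 f) (obs_law n \<delta> S0 g) / 2"
    if "\<delta> > 0" "bounded (f ` {0..1})" "bounded (g ` {0..1})"
    for n :: nat and \<delta> S0 :: real and f g :: "real \<Rightarrow> real"
    using tv_dist_obs_law_le[OF that, of n S0] unfolding R_def by linarith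
  show ?thesis
    by (intro exI[of _ 2] exI[of _ R] conjI allI impI R_pos R_antimono R_le tv_dist_obs_law_le_sqrt)
      simp_all
qed

end
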